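(* For every word $\omega\in[n]^*$, $M_\omega B_\omega\subseteq\{x\in\mathbb{Z}^n: 0\le x\le u_\omega\}$ (coordinatewise), and $M_\omega B_\omega=u_\omega-M_\omega B_\omega$.
   Context: Let $[n]=\{1,\dots,n\}$, $e_1,\dots,e_n$ the standard basis of $\mathbb{Z}^n$; $\varepsilon$ is the empty word, $*$ concatenation. For words $\omega$ over $[n]$ define recursively $\delta^i_\omega\in\mathbb{Z}^n$: $\delta^i_\varepsilon=e_i$; $\delta^j_{\omega*j}=\delta^j_\omega$, $\delta^i_{\omega*j}=\delta^i_\omega-\delta^j_\omega$ for $i\ne j$. Let $B_\varepsilon=\{0\}$, $B_{\omega*j}=B_\omega+\{0,\delta^j_\omega\}$ (Minkowski sum). Let $M_\omega=(\delta^1_\omega\ \cdots\ \delta^n_\omega)^{-1}$ (inverse of the matrix with columns $\delta^i_\omega$). For $k\in[n]$ let $D^k=\mathrm{id}+e_k(\mathbb{1}-e_k)^T$ with $\mathbb{1}=(1,\dots,1)^T$. Define $u_\varepsilon=0$, $u_{\omega*j}=e_j+D^j u_\omega$. *)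

theory Defs
  imports "HOL-Analysis.Analysis"
begin

text \<open>Words over [n] are lists over a finite type 'n (the index set {1..n});
  vectors in Z^n are represented in real^'n, integrality is stated explicitly.
  Recursions "on the last letter" are implemented on the reversed word.\<close>

primrec delta_rev :: "'n::finite list \<Rightarrow> 'n \<Rightarrow> real^'n" where
  "delta_rev [] i = axis i 1"
| "delta_rev (j # w) i = (if i = j then delta_rev w j else delta_rev w i - delta_rev w j)"

definition delta :: "'n::finite list \<Rightarrow> 'n \<Rightarrow> real^'n" where
  "delta w i = delta_rev (rev w) i"

primrec B_rev :: "'n::finite list \<Rightarrow> (real^'n) set" where
  "B_rev [] = {0}"
| "B_rev (j # w) = {x + y | x y. x \<in> B_rev w \<and> y \<in> {0, delta_rev w j}}"

definition Bw :: "'n::finite list \<Rightarrow> (real^'n) set" where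
  "Bw w = B_rev (rev w)"

definition Mw :: "'n::finite list \<Rightarrow> real^'n^'n" where
  "Mw w = matrix_inv (\<chi> i j. delta w j $ i)"

definition Dmat :: "'n::finite \<Rightarrow> real^'n^'n" where
  "Dmat k = mat 1 + (\<chi> i j. axis k (1::real) $ i * ((\<chi> l. 1) - axis k 1) $ j)"

primrec u_rev :: "'n::finite list \<Rightarrow> real^'n" where
  "u_rev [] = 0"
| "u_rev (j # w) = axis j 1 + Dmat j *v u_rev w"

definition uw :: "'n::finite list \<Rightarrow> real^'n" where
  "uw w = u_rev (rev w)"

end

theory Submission
  imports Defs
begin

text \<open>
  Write \<open>D\<^sup>k = 1 + N\<^sup>k\<close> with \<open>N\<^sup>k = e\<^sub>k (\<one> - e\<^sub>k)\<^sup>T\<close>. Since \<open>(N\<^sup>k)\<^sup>2 = 0\<close>, the recursion for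
  \<open>\<delta>\<close> says that the matrix of the \<open>\<delta>\<^sup>i\<^sub>\<omega>\<close> is a product of the matrices \<open>1 - N\<^sup>j\<close>, so
  \<open>M\<^sub>\<omega>\<^sub>*\<^sub>j = D\<^sup>j M\<^sub>\<omega>\<close> and \<open>M\<^sub>\<omega>\<^sub>*\<^sub>j \<delta>\<^sup>j\<^sub>\<omega> = e\<^sub>j\<close>. Hence
  \<open>M\<^sub>\<omega>\<^sub>*\<^sub>j B\<^sub>\<omega>\<^sub>*\<^sub>j = D\<^sup>j (M\<^sub>\<omega> B\<^sub>\<omega>) + {0, e\<^sub>j}\<close>, and both claims follow by induction on \<open>\<omega>\<close>:
  \<open>D\<^sup>j\<close> has nonnegative integer entries and so preserves integral boxes, and
  \<open>x \<mapsto> u - x\<close> commutes with this recursion because \<open>u\<^sub>\<omega>\<^sub>*\<^sub>j = D\<^sup>j u\<^sub>\<omega> + e\<^sub>j\<close> and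
  \<open>{0, e\<^sub>j} = e\<^sub>j - {0, e\<^sub>j}\<close>.
\<close>

lemma matrix_inv_eqI:
  fixes A :: "'a::semiring_1^'n^'m"
  assumes "A ** B = mat 1" and "B ** A = mat 1"
  shows "matrix_inv A = B"
proof -
  define C where "C = matrix_inv A"
  have C: "A ** C = mat 1 \<and> C ** A = mat 1"
    unfolding C_def matrix_inv_def by (rule someI[of _ B]) (use assms in blast)
  have "C = C ** (A ** B)" using assms by simp
  also have "\<dots> = B" using C by (simp add: matrix_mul_assoc)
  finally show ?thesis unfolding C_def .
qed

lemma matrix_add_rdistrib:
  fixes A :: "'a::semiring_1^'n^'m"
  shows "(A + B) ** C = A ** C + B ** C"
  by (simp add: vec_eq_iff matrix_matrix_mult_def sum.distrib distrib_right)

lemma matrix_diff_ldistrib: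
  fixes A :: "'a::ring_1^'n^'m"
  shows "A ** (B - C) = A ** B - A ** C"
  by (simp add: vec_eq_iff matrix_matrix_mult_def sum_subtractf right_diff_distrib)

lemma matrix_diff_rdistrib:
  fixes A :: "'a::ring_1^'n^'m"
  shows "(A - B) ** C = A ** C - B ** C"
  by (simp add: vec_eq_iff matrix_matrix_mult_def sum_subtractf left_diff_distrib)

lemma matrix_unipotent_inverse:
  fixes N :: "'a::ring_1^'n^'n"
  assumes "N ** N = 0"
  shows "(mat 1 + N) ** (mat 1 - N) = mat 1" and "(mat 1 - N) ** (mat 1 + N) = mat 1"
  using assms
  by (simp_all add: matrix_add_ldistrib matrix_add_rdistrib matrix_diff_ldistrib matrix_diff_rdistrib)

definition Nmat :: "'n::finite \<Rightarrow> real^'n^'n" where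
  "Nmat k = (\<chi> i j. axis k 1 $ i * ((\<chi> l. 1) - axis k 1) $ j)"

lemma Dmat_eq_Nmat: "Dmat k = mat 1 + Nmat k"
  by (simp add: Dmat_def Nmat_def)

lemma Nmat_square: "Nmat k ** Nmat k = 0"
  by (auto simp: vec_eq_iff matrix_matrix_mult_def axis_def Nmat_def intro!: sum.neutral)

lemma Dmat_mult_vec_nth:
  "(Dmat j *v x) $ i = (if i = j then (\<Sum>l\<in>UNIV. x $ l) else x $ i)"
proof -
  have "(Nmat j *v x) $ i = axis j 1 $ i * (\<Sum>l\<in>UNIV. (1 - axis j 1 $ l) * x $ l)"
    by (simp add: Nmat_def matrix_vector_mult_def sum_distrib_left mult.assoc)
  also have "(\<Sum>l\<in>UNIV. (1 - axis j 1 $ l) * x $ l) = (\<Sum>l\<in>UNIV. x $ l) - x $ j"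
    by (simp add: left_diff_distrib sum_subtractf axis_def flip: of_bool_def)
  finally show ?thesis
    by (simp add: Dmat_eq_Nmat matrix_vector_mult_add_rdistrib axis_def)
qed

definition delta_matrix_rev :: "'n::finite list \<Rightarrow> real^'n^'n" where
  "delta_matrix_rev w = (\<chi> i k. delta_rev w k $ i)"

lemma delta_matrix_rev_Nil: "delta_matrix_rev [] = mat 1"
  by (simp add: delta_matrix_rev_def vec_eq_iff mat_def axis_def)

lemma delta_matrix_rev_Cons:
  "delta_matrix_rev (j # w) = delta_matrix_rev w ** (mat 1 - Nmat j)"
proof -
  have "(delta_matrix_rev w ** (mat 1 - Nmat j)) $ i $ k = delta_rev (j # w) k $ i" for i k
  proof -
    have "(delta_matrix_rev w ** (mat 1 - Nmat j)) $ i $ k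
        = (\<Sum>l\<in>UNIV. (if l = k then delta_rev w l $ i else 0)
                     - (if l = j then delta_rev w l $ i * (if k = j then 0 else 1) else 0))"
      by (auto simp: matrix_matrix_mult_def delta_matrix_rev_def Nmat_def mat_def axis_def
          intro!: sum.cong)
    also have "\<dots> = delta_rev (j # w) k $ i"
      by (simp add: sum_subtractf)
    finally show ?thesis .
  qed
  then show ?thesis
    by (simp add: vec_eq_iff delta_matrix_rev_def)
qed

primrec Dprod_rev :: "'n::finite list \<Rightarrow> real^'n^'n" where
  "Dprod_rev [] = mat 1"
| "Dprod_rev (j # w) = Dmat j ** Dprod_rev w"

lemma Dprod_rev_inverse:
  shows "Dprod_rev w ** delta_matrix_rev w = mat 1"
    and "delta_matrix_rev w ** Dprod_rev w = mat 1"
proof (induction w)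
  case Nil
  show "Dprod_rev [] ** delta_matrix_rev [] = mat 1" "delta_matrix_rev [] ** Dprod_rev [] = mat 1"
    by (simp_all add: delta_matrix_rev_Nil)
next
  case (Cons j w)
  note inv = matrix_unipotent_inverse[OF Nmat_square, folded Dmat_eq_Nmat]
  have "Dprod_rev (j # w) ** delta_matrix_rev (j # w)
      = Dmat j ** (Dprod_rev w ** delta_matrix_rev w) ** (mat 1 - Nmat j)"
    by (simp add: delta_matrix_rev_Cons matrix_mul_assoc)
  also have "\<dots> = mat 1"
    using Cons.IH(1) inv(1) by simp
  finally show "Dprod_rev (j # w) ** delta_matrix_rev (j # w) = mat 1" .
  have "delta_matrix_rev (j # w) ** Dprod_rev (j # w)
      = delta_matrix_rev w ** ((mat 1 - Nmat j) ** Dmat j) ** Dprod_rev w"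
    by (simp add: delta_matrix_rev_Cons matrix_mul_assoc)
  also have "\<dots> = mat 1"
    by (simp only: inv(2) matrix_mul_rid Cons.IH(2))
  finally show "delta_matrix_rev (j # w) ** Dprod_rev (j # w) = mat 1" .
qed

lemma Mw_eq_Dprod_rev: "Mw w = Dprod_rev (rev w)"
proof -
  have "(\<chi> i j. delta w j $ i) = delta_matrix_rev (rev w)"
    by (simp add: delta_matrix_rev_def delta_def)
  then show ?thesis
    by (simp add: Mw_def matrix_inv_eqI Dprod_rev_inverse)
qed

lemma Dprod_rev_mult_delta_rev: "Dprod_rev w *v delta_rev w j = axis j 1"
proof -
  have "delta_rev w j = delta_matrix_rev w *v axis j 1"
    by (simp add: matrix_vector_mult_basis column_def delta_matrix_rev_def vec_eq_iff)
  then show ?thesis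
    by (simp add: matrix_vector_mul_assoc Dprod_rev_inverse)
qed

definition MB_rev :: "'n::finite list \<Rightarrow> (real^'n) set" where
  "MB_rev w = (\<lambda>b. Dprod_rev w *v b) ` B_rev w"

lemma MB_rev_Nil: "MB_rev [] = {0}"
  by (simp add: MB_rev_def)

lemma matrix_vector_mult_image_set_plus:
  "(\<lambda>b. A *v b) ` {x + y | x y. x \<in> S \<and> y \<in> T}
     = {x + y | x y. x \<in> (\<lambda>b. A *v b) ` S \<and> y \<in> (\<lambda>b. A *v b) ` T}"
  (is "?lhs = ?rhs")
proof
  show "?lhs \<subseteq> ?rhs"
    by (auto simp: matrix_vector_right_distrib) (metis imageI)
  show "?rhs \<subseteq> ?lhs"
    by (auto simp: matrix_vector_right_distrib[symmetric] intro!: imageI) blast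
qed

lemma Collect_plus_image:
  "{x + y | x y. x \<in> f ` S \<and> y \<in> T} = {f x + y | x y. x \<in> S \<and> y \<in> T}"
  by blast

lemma MB_rev_Cons:
  "MB_rev (j # w) = {Dmat j *v x + y | x y. x \<in> MB_rev w \<and> y \<in> {0, axis j 1}}"
proof -
  have Dprod: "Dprod_rev (j # w) *v b = Dmat j *v (Dprod_rev w *v b)" for b
    by (simp add: matrix_vector_mul_assoc)
  have "Dmat j *v axis j 1 = axis j 1"
    by (simp add: vec_eq_iff Dmat_mult_vec_nth axis_def)
  then have "(\<lambda>c. Dprod_rev (j # w) *v c) ` {0, delta_rev w j} = {0, axis j 1}"
    by (simp only: image_insert image_empty Dprod matrix_vector_mult_0_right Dprod_rev_mult_delta_rev)
  moreover have "(\<lambda>b. Dprod_rev (j # w) *v b) ` B_rev w = (\<lambda>x. Dmat j *v x) ` MB_rev w"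
    by (simp only: MB_rev_def image_image Dprod)
  ultimately have "MB_rev (j # w)
      = {x + y | x y. x \<in> (\<lambda>x. Dmat j *v x) ` MB_rev w \<and> y \<in> {0, axis j 1}}"
    unfolding MB_rev_def[of "j # w"] B_rev.simps matrix_vector_mult_image_set_plus
    by (simp only:)
  then show ?thesis
    by (simp only: Collect_plus_image)
qed

definition int_box :: "real^'n \<Rightarrow> (real^'n) set" where
  "int_box u = {x. \<forall>i. x $ i \<in> \<int> \<and> 0 \<le> x $ i \<and> x $ i \<le> u $ i}"

lemma add_int_box: "x \<in> int_box u \<Longrightarrow> y \<in> int_box v \<Longrightarrow> x + y \<in> int_box (u + v)"
  by (auto simp: int_box_def add_mono)

lemma axis_int_box: "{0, axis j 1} \<subseteq> int_box (axis j 1)"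
  by (auto simp: int_box_def axis_def)

lemma Dmat_mult_vec_int_box:
  assumes "x \<in> int_box u"
  shows "Dmat j *v x \<in> int_box (Dmat j *v u)"
  using assms
  by (auto simp: int_box_def Dmat_mult_vec_nth intro!: Ints_sum sum_nonneg sum_mono)

lemma MB_rev_subset_int_box: "MB_rev w \<subseteq> int_box (u_rev w)"
proof (induction w)
  case Nil
  show ?case by (simp add: MB_rev_Nil int_box_def)
next
  case (Cons j w)
  show ?case
  proof
    fix z assume "z \<in> MB_rev (j # w)"
    then obtain x y where "x \<in> MB_rev w" "y \<in> {0, axis j 1}" and z: "z = Dmat j *v x + y"
      by (auto simp: MB_rev_Cons)
    then have "z \<in> int_box (Dmat j *v u_rev w + axis j 1)"
      using Cons axis_int_box by (blast intro: add_int_box Dmat_mult_vec_int_box)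
    then show "z \<in> int_box (u_rev (j # w))"
      by (simp add: add.commute)
  qed
qed

lemma MB_rev_reflect: "x \<in> MB_rev w \<Longrightarrow> u_rev w - x \<in> MB_rev w"
proof (induction w arbitrary: x)
  case Nil
  then show ?case by (simp add: MB_rev_Nil)
next
  case (Cons j w)
  then obtain x' y where x': "x' \<in> MB_rev w" and y: "y \<in> {0, axis j 1}"
    and x: "x = Dmat j *v x' + y"
    by (auto simp: MB_rev_Cons)
  have "u_rev w - x' \<in> MB_rev w"
    using Cons.IH x' .
  moreover have "axis j 1 - y \<in> {0, axis j 1}"
    using y by auto
  moreover have "u_rev (j # w) - x = Dmat j *v (u_rev w - x') + (axis j 1 - y)"
    by (simp add: x matrix_vector_mult_diff_distrib)
  ultimately show ?case
    unfolding MB_rev_Cons by blast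
qed

lemma image_reflect_eq:
  fixes S :: "'a::ab_group_add set"
  assumes "\<And>x. x \<in> S \<Longrightarrow> c - x \<in> S"
  shows "(\<lambda>x. c - x) ` S = S"
  using assms by (force intro: image_eqI[where x = "c - _"])

theorem corollary3p3:
  fixes w :: "'n::finite list"
  shows "(\<forall>b \<in> Bw w. (\<forall>i. (Mw w *v b) $ i \<in> \<int> \<and> 0 \<le> (Mw w *v b) $ i
                              \<and> (Mw w *v b) $ i \<le> uw w $ i))
       \<and> (\<lambda>b. Mw w *v b) ` Bw w = (\<lambda>b. uw w - Mw w *v b) ` Bw w"
proof -
  have MB: "(\<lambda>b. Mw w *v b) ` Bw w = MB_rev (rev w)"
    by (simp add: MB_rev_def Bw_def Mw_eq_Dprod_rev)
  have "(\<lambda>b. uw w - Mw w *v b) ` Bw w = (\<lambda>x. uw w - x) ` MB_rev (rev w)"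
    by (simp only: MB[symmetric] image_image)
  also have "\<dots> = MB_rev (rev w)"
    using MB_rev_reflect[of _ "rev w"] by (simp add: uw_def image_reflect_eq)
  finally show ?thesis
    using MB MB_rev_subset_int_box[of "rev w"] by (auto simp: int_box_def uw_def)
qed

end
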